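(* Let $\mathcal{W}=\{1,\ldots,n\}$ be a finite vocabulary, let $\#(i,j)\ge 0$ be co-occurrence counts for $i,j\in\mathcal{W}$ with $\#(i,j)>0$ for all $i,j$, let $N=\sum_{i,j\in\mathcal{W}}\#(i,j)$, $\#(i)=\sum_{j\in\mathcal{W}}\#(i,j)$, $p(i,j)=\#(i,j)/N$, $p(i)=\#(i)/N$, and let $k>0$ be the number of negative samples. Suppose $\mathbf{w}_i,\mathbf{c}_j\in\mathbb{R}^d$ satisfy $0<\langle\mathbf{w}_i,\mathbf{c}_j\rangle<1$ for all $i,j$. Consider the objective $$\mathcal{L}=\sum_{i\in\mathcal{W}}\sum_{j\in\mathcal{W}}\#(i,j)\Big(\log\langle\mathbf{w}_i,\mathbf{c}_j\rangle+k\cdot\mathbb{E}_{j'\sim P}\big[\log(1-\langle\mathbf{w}_i,\mathbf{c}_{j'}\rangle)\big]\Big),$$ where $P$ is the unigram distribution $P(j')=p(j')$. Then, viewing $\mathcal{L}$ as a function of the quantities $x_{ij}=\langle\mathbf{w}_i,\mathbf{c}_j\rangle\in(0,1)$ treated as independent variables, $\mathcal{L}$ reaches its optimum (maximum) at $$\langle\mathbf{w}_i,\mathbf{c}_j\rangle=\sigma\Big(\log\frac{p(i,j)}{p(i)p(j)}-\log k\Big)\quad\text{for all } i,j\in\mathcal{W},$$ where $\sigma(x)=\frac{1}{1+e^{-x}}$ is the logistic sigmoid.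
   Context: The quantity $\mathrm{PMI}_{ij}=\log\frac{p(i,j)}{p(i)p(j)}$ is the pointwise mutual information, and $\sigma\mathrm{SPMI}_{ij}:=\sigma(\mathrm{PMI}_{ij}-\log k)$ is called the squashed shifted PMI matrix. Co-occurrence counts $\#(i,j)$ count how often words $i$ and $j$ appear together within a fixed-size context window of a corpus. *)

theory Defs
  imports Complex_Main
begin

definition total_count :: "(nat \<Rightarrow> nat \<Rightarrow> real) \<Rightarrow> nat \<Rightarrow> real" where
  "total_count cnt n = (\<Sum>i\<in>{1..n}. \<Sum>j\<in>{1..n}. cnt i j)"

definition word_count :: "(nat \<Rightarrow> nat \<Rightarrow> real) \<Rightarrow> nat \<Rightarrow> nat \<Rightarrow> real" where
  "word_count cnt n i = (\<Sum>j\<in>{1..n}. cnt i j)"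

definition p_joint :: "(nat \<Rightarrow> nat \<Rightarrow> real) \<Rightarrow> nat \<Rightarrow> nat \<Rightarrow> nat \<Rightarrow> real" where
  "p_joint cnt n i j = cnt i j / total_count cnt n"

definition p_word :: "(nat \<Rightarrow> nat \<Rightarrow> real) \<Rightarrow> nat \<Rightarrow> nat \<Rightarrow> real" where
  "p_word cnt n i = word_count cnt n i / total_count cnt n"

definition PMI :: "(nat \<Rightarrow> nat \<Rightarrow> real) \<Rightarrow> nat \<Rightarrow> nat \<Rightarrow> nat \<Rightarrow> real" where
  "PMI cnt n i j = ln (p_joint cnt n i j / (p_word cnt n i * p_word cnt n j))"

definition sigmoid :: "real \<Rightarrow> real" where
  "sigmoid x = 1 / (1 + exp (- x))"

text \<open>The SGNS objective as a function of the independent variables x i j = <w_i, c_j>;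
  the expectation over the unigram distribution P(j') = p(j') is written out as a finite sum.\<close>
definition sgns_objective ::
  "(nat \<Rightarrow> nat \<Rightarrow> real) \<Rightarrow> nat \<Rightarrow> real \<Rightarrow> (nat \<Rightarrow> nat \<Rightarrow> real) \<Rightarrow> real" where
  "sgns_objective cnt n k x =
     (\<Sum>i\<in>{1..n}. \<Sum>j\<in>{1..n}.
        cnt i j * (ln (x i j) + k * (\<Sum>j'\<in>{1..n}. p_word cnt n j' * ln (1 - x i j'))))"

end

theory Submission
  imports Defs
begin

text \<open>Regrouping the negative-sampling expectation, the objective is a sum over the pairs (i, j)
  of independent terms \<open>#(i,j) ln x + b ln (1 - x)\<close> with \<open>b = k #(i) p(j)\<close>, the expected number
  of times (i, j) is drawn as a negative sample. Each such term is maximised on (0, 1) at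
  \<open>x = #(i,j) / (#(i,j) + b)\<close>, by Gibbs' inequality, and this fraction is the sigmoid of
  \<open>ln (#(i,j) / b) = PMI - ln k\<close>.\<close>

lemma weighted_binary_log_le:
  fixes a b x :: real
  assumes a: "a > 0" and b: "b > 0" and x: "0 < x" "x < 1"
  shows "a * ln x + b * ln (1 - x) \<le> a * ln (a / (a + b)) + b * ln (1 - a / (a + b))"
proof -
  define y where "y = a / (a + b)"
  have y: "0 < y" "y < 1" using a b by (auto simp: y_def field_simps)
  have "a * ln (x / y) + b * ln ((1 - x) / (1 - y)) \<le> a * (x / y - 1) + b * ((1 - x) / (1 - y) - 1)"
    using x y a b by (intro add_mono mult_left_mono ln_le_minus_one) auto
  also have "\<dots> = 0"
  proof -
    have "1 - y = b / (a + b)" using a b by (simp add: y_def field_simps)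
    then show ?thesis using a b by (simp add: y_def field_simps)
  qed
  finally show ?thesis
    using x y by (simp add: ln_div y_def[symmetric] algebra_simps)
qed

lemma sigmoid_ln_divide:
  fixes a b :: real
  assumes "a > 0" "b > 0"
  shows "sigmoid (ln (a / b)) = a / (a + b)"
  using assms by (simp add: sigmoid_def ln_div exp_diff field_simps)

lemma word_count_pos:
  assumes "\<And>j. j \<in> {1..n} \<Longrightarrow> cnt i j > 0" and "i \<in> {1..n}"
  shows "word_count cnt n i > 0"
  unfolding word_count_def using assms by (intro sum_pos) auto

lemma total_count_pos:
  assumes "\<And>i j. i \<in> {1..n} \<Longrightarrow> j \<in> {1..n} \<Longrightarrow> cnt i j > 0" and "n \<ge> 1"
  shows "total_count cnt n > 0"
  unfolding total_count_def
  using assms word_count_pos[of n cnt] by (intro sum_pos) (auto simp: word_count_def)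

definition neg_weight :: "(nat \<Rightarrow> nat \<Rightarrow> real) \<Rightarrow> nat \<Rightarrow> real \<Rightarrow> nat \<Rightarrow> nat \<Rightarrow> real" where
  "neg_weight cnt n k i j = k * word_count cnt n i * p_word cnt n j"

lemma neg_weight_pos:
  assumes "\<And>i j. i \<in> {1..n} \<Longrightarrow> j \<in> {1..n} \<Longrightarrow> cnt i j > 0"
    and "k > 0" and "i \<in> {1..n}" and "j \<in> {1..n}"
  shows "neg_weight cnt n k i j > 0"
  using assms word_count_pos[of n cnt] total_count_pos[of n cnt]
  by (auto simp: neg_weight_def p_word_def)

lemma sgns_objective_eq_sum_pairs:
  "sgns_objective cnt n k x =
    (\<Sum>i\<in>{1..n}. \<Sum>j\<in>{1..n}. cnt i j * ln (x i j) + neg_weight cnt n k i j * ln (1 - x i j))"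
proof -
  have "(\<Sum>j\<in>{1..n}. cnt i j * (ln (x i j) + k * (\<Sum>j'\<in>{1..n}. p_word cnt n j' * ln (1 - x i j'))))
      = (\<Sum>j\<in>{1..n}. cnt i j * ln (x i j) + neg_weight cnt n k i j * ln (1 - x i j))" for i
  proof -
    have "(\<Sum>j\<in>{1..n}. cnt i j * (ln (x i j) + k * (\<Sum>j'\<in>{1..n}. p_word cnt n j' * ln (1 - x i j'))))
        = (\<Sum>j\<in>{1..n}. cnt i j * ln (x i j))
          + word_count cnt n i * (k * (\<Sum>j'\<in>{1..n}. p_word cnt n j' * ln (1 - x i j')))"
      by (simp add: distrib_left sum.distrib word_count_def sum_distrib_right)
    also have "\<dots> = (\<Sum>j\<in>{1..n}. cnt i j * ln (x i j))
          + (\<Sum>j\<in>{1..n}. neg_weight cnt n k i j * ln (1 - x i j))"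
      by (simp add: neg_weight_def sum_distrib_left mult_ac)
    finally show ?thesis by (simp add: sum.distrib)
  qed
  then show ?thesis unfolding sgns_objective_def by simp
qed

lemma shifted_PMI_eq_ln_neg_weight:
  assumes cnt_pos: "\<And>i j. i \<in> {1..n} \<Longrightarrow> j \<in> {1..n} \<Longrightarrow> cnt i j > 0"
    and k: "k > 0" and i: "i \<in> {1..n}" and j: "j \<in> {1..n}"
  shows "PMI cnt n i j - ln k = ln (cnt i j / neg_weight cnt n k i j)"
proof -
  have pos: "cnt i j > 0" "word_count cnt n i > 0" "word_count cnt n j > 0" "total_count cnt n > 0"
    using cnt_pos i j word_count_pos[of n cnt] total_count_pos[of n cnt] by auto
  define q where "q = p_joint cnt n i j / (p_word cnt n i * p_word cnt n j)"
  have "q > 0" using pos by (simp add: q_def p_joint_def p_word_def)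
  then have "PMI cnt n i j - ln k = ln (q / k)"
    unfolding PMI_def q_def[symmetric] using k by (simp add: ln_div)
  also have "q / k = cnt i j / neg_weight cnt n k i j"
    using pos by (simp add: q_def p_joint_def p_word_def neg_weight_def field_simps)
  finally show ?thesis .
qed

theorem theorem1:
  fixes cnt :: "nat \<Rightarrow> nat \<Rightarrow> real" and n :: nat and k :: real
  assumes cnt_pos: "\<And>i j. i \<in> {1..n} \<Longrightarrow> j \<in> {1..n} \<Longrightarrow> cnt i j > 0"
    and k_pos: "k > 0"
  defines "xopt \<equiv> (\<lambda>i j. sigmoid (PMI cnt n i j - ln k))"
  shows "(\<forall>i\<in>{1..n}. \<forall>j\<in>{1..n}. 0 < xopt i j \<and> xopt i j < 1)
    \<and> (\<forall>x. (\<forall>i\<in>{1..n}. \<forall>j\<in>{1..n}. 0 < x i j \<and> x i j < 1)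
           \<longrightarrow> sgns_objective cnt n k x \<le> sgns_objective cnt n k xopt)"
proof -
  let ?b = "neg_weight cnt n k"
  have b_pos: "?b i j > 0" if "i \<in> {1..n}" "j \<in> {1..n}" for i j
    using neg_weight_pos[of n cnt k] cnt_pos k_pos that by blast
  have xopt_eq: "xopt i j = cnt i j / (cnt i j + ?b i j)" if "i \<in> {1..n}" "j \<in> {1..n}" for i j
  proof -
    have "xopt i j = sigmoid (ln (cnt i j / ?b i j))"
      using shifted_PMI_eq_ln_neg_weight[OF cnt_pos k_pos that] by (simp add: xopt_def)
    then show ?thesis using cnt_pos[OF that] b_pos[OF that] by (simp add: sigmoid_ln_divide)
  qed
  have "0 < xopt i j \<and> xopt i j < 1" if "i \<in> {1..n}" "j \<in> {1..n}" for i j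
    using xopt_eq[OF that] cnt_pos[OF that] b_pos[OF that] by (simp add: divide_less_eq)
  moreover have "sgns_objective cnt n k x \<le> sgns_objective cnt n k xopt"
    if "\<forall>i\<in>{1..n}. \<forall>j\<in>{1..n}. 0 < x i j \<and> x i j < 1" for x
    unfolding sgns_objective_eq_sum_pairs
    using that cnt_pos b_pos xopt_eq weighted_binary_log_le
    by (intro sum_mono) auto
  ultimately show ?thesis by blast
qed

end
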